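(* A general binary quartic $p\in H_4(\mathbb{C}^2)$ can be written as $$p(x,y) = (t_1x^2+t_2xy+t_3y^2)^2 + (t_4x+t_5y)^4, \qquad t_i\in\mathbb{C},$$ in exactly six different ways. Moreover, the set of the six resulting ratios $t_5/t_4\in\mathbb{C}\cup\{\infty\}$ is the image of the set $\{0,\infty,1,-1,i,-i\}$ under a Möbius transformation.
   Context: $H_d(\mathbb{C}^n)$ denotes the complex vector space of homogeneous polynomials of degree $d$ in $n$ variables. "A general $p$ has property P" means P holds for all $p$ in a nonempty Zariski-open subset of $H_d(\mathbb{C}^n)$. Two representations are considered the same if they agree up to replacing the quadratic form by its negative and replacing the linear form $\ell$ by $\zeta\ell$ with $\zeta^4=1$. *)

theory Defs
  imports Complex_Main
begin

text \<open>A binary quartic p in H_4(C^2) is given by its coefficient vector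
  a 0, ..., a 4 (coordinates of index >= 5 are ignored):
  p(x,y) = sum_{k=0..4} a k * x^(4-k) * y^k.\<close>

definition quartic :: "(nat \<Rightarrow> complex) \<Rightarrow> complex \<Rightarrow> complex \<Rightarrow> complex" where
  "quartic a x y = (\<Sum>k\<le>4. a k * x ^ (4 - k) * y ^ k)"

inductive poly_fun :: "nat \<Rightarrow> ((nat \<Rightarrow> complex) \<Rightarrow> complex) \<Rightarrow> bool" for n where
  pf_const: "poly_fun n (\<lambda>a. c)"
| pf_var: "i < n \<Longrightarrow> poly_fun n (\<lambda>a. a i)"
| pf_add: "poly_fun n f \<Longrightarrow> poly_fun n g \<Longrightarrow> poly_fun n (\<lambda>a. f a + g a)"
| pf_mult: "poly_fun n f \<Longrightarrow> poly_fun n g \<Longrightarrow> poly_fun n (\<lambda>a. f a * g a)"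

text \<open>A property holds for a general binary quartic iff it holds on a nonempty
  Zariski-open subset of H_4(C^2) = C^5; equivalently on the non-vanishing locus
  of some polynomial function that is not identically zero.\<close>

definition general_quartic :: "((nat \<Rightarrow> complex) \<Rightarrow> bool) \<Rightarrow> bool" where
  "general_quartic P \<longleftrightarrow>
     (\<exists>g. poly_fun 5 g \<and> (\<exists>a. g a \<noteq> 0) \<and> (\<forall>a. g a \<noteq> 0 \<longrightarrow> P a))"

type_synonym rep = "complex \<times> complex \<times> complex \<times> complex \<times> complex"

definition reps :: "(nat \<Rightarrow> complex) \<Rightarrow> rep set" where
  "reps a = {(t1, t2, t3, t4, t5). \<forall>x y.
      quartic a x y = (t1 * x^2 + t2 * x * y + t3 * y^2)^2 + (t4 * x + t5 * y)^4}"

text \<open>Two representations are the same if they agree up to q -> -q and l -> zeta l with zeta^4 = 1.\<close>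

definition rep_equiv :: "(rep \<times> rep) set" where
  "rep_equiv = {((s1, s2, s3, s4, s5), (t1, t2, t3, t4, t5)).
      (\<exists>\<epsilon>::complex. (\<epsilon> = 1 \<or> \<epsilon> = -1) \<and> t1 = \<epsilon> * s1 \<and> t2 = \<epsilon> * s2 \<and> t3 = \<epsilon> * s3) \<and>
      (\<exists>\<zeta>::complex. \<zeta> ^ 4 = 1 \<and> t4 = \<zeta> * s4 \<and> t5 = \<zeta> * s5)}"

text \<open>Points of C \<union> {\<infinity>}: Some z is z, None is \<infinity>.\<close>

definition ratio :: "rep \<Rightarrow> complex option" where
  "ratio t = (case t of (t1, t2, t3, t4, t5) \<Rightarrow> if t4 = 0 then None else Some (t5 / t4))"

definition mobius :: "complex \<Rightarrow> complex \<Rightarrow> complex \<Rightarrow> complex \<Rightarrow> complex option \<Rightarrow> complex option" where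
  "mobius \<alpha> \<beta> \<gamma> \<delta> z = (case z of
      None \<Rightarrow> (if \<gamma> = 0 then None else Some (\<alpha> / \<gamma>))
    | Some w \<Rightarrow> (if \<gamma> * w + \<delta> = 0 then None else Some ((\<alpha> * w + \<beta>) / (\<gamma> * w + \<delta>))))"

end

theory Submission
  imports Defs "HOL-Computational_Algebra.Fundamental_Theorem_Algebra"
begin

(* Write p = a0 x^4 + a1 x^3 y + a2 x^2 y^2 + a3 x y^3 + a4 y^4.
   (1) A representation p = q^2 + l^4 with l = t4 (x + \<rho> y) exists iff, after the
       substitution x \<mapsto> x - \<rho> y, the coefficients of x^3 y, ..., y^4 of p are those of
       the square of a binary quadratic form.  For a quartic with a0 \<noteq> 0 and nonzero
       depressed linear coefficient K(p), this happens exactly when \<rho> is a root of an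
       explicit sextic S(\<rho>); if moreover p(-\<rho>, 1) \<noteq> 0, the representation with ratio \<rho>
       is unique up to q \<mapsto> -q, l \<mapsto> \<zeta> l.  Then the classes of representations
       correspond bijectively to the roots of S.
   (2) Writing p(x,1) = a0 (x - r1)(x - r2)(x - r3)(x - r4), S factors into three
       quadratics, one for each way of splitting the roots into two pairs.  If the
       discriminant and K(p) are nonzero, each quadratic has two distinct roots, and
       the three root pairs are mutually harmonic.
   (3) Three mutually harmonic pairs of points form an octahedral configuration: a
       Moebius transformation maps {0,\<infinity>}, {1,-1}, {i,-i} onto them.
   The theorem follows, the Zariski-open set being a0 \<cdot> disc(p) \<cdot> K(p) \<noteq> 0. *)

lemma quartic_expand:
  "quartic a x y = a 0 * x^4 + a 1 * x^3 * y + a 2 * x^2 * y^2 + a 3 * x * y^3 + a 4 * y^4"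
  by (simp add: quartic_def numeral_eq_Suc atMost_Suc)

lemma quartic_poly_eq_0:
  fixes c0 c1 c2 c3 c4 :: complex
  assumes "\<And>x. c0*x^4 + c1*x^3 + c2*x^2 + c3*x + c4 = 0"
  shows "c0 = 0 \<and> c1 = 0 \<and> c2 = 0 \<and> c3 = 0 \<and> c4 = 0"
proof -
  have "poly [:c4, c3, c2, c1, c0:] x = 0" for x
    using assms[of x] by (simp add: algebra_simps eval_nat_numeral)
  then have "[:c4, c3, c2, c1, c0:] = 0"
    using poly_all_0_iff_0 by blast
  then show ?thesis by simp
qed

lemma rep_iff_coeffs:
  "(t1, t2, t3, t4, t5) \<in> reps a \<longleftrightarrow>
    a 0 = t1^2 + t4^4 \<and> a 1 = 2*t1*t2 + 4*t4^3*t5 \<and> a 2 = t2^2 + 2*t1*t3 + 6*t4^2*t5^2 \<and>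
    a 3 = 2*t2*t3 + 4*t4*t5^3 \<and> a 4 = t3^2 + t5^4"
    (is "_ \<longleftrightarrow> ?coeffs")
proof
  assume "(t1, t2, t3, t4, t5) \<in> reps a"
  then have rep: "a 0*x^4 + a 1*x^3 + a 2*x^2 + a 3*x + a 4 = (t1*x^2 + t2*x + t3)^2 + (t4*x + t5)^4"
    for x
    using quartic_expand[of a x 1] by (auto simp: reps_def)
  have "(a 0 - (t1^2 + t4^4))*x^4 + (a 1 - (2*t1*t2 + 4*t4^3*t5))*x^3
      + (a 2 - (t2^2 + 2*t1*t3 + 6*t4^2*t5^2))*x^2 + (a 3 - (2*t2*t3 + 4*t4*t5^3))*x
      + (a 4 - (t3^2 + t5^4)) = 0" for x
    using rep[of x] by algebra
  from quartic_poly_eq_0[OF this] show ?coeffs by simp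
next
  assume ?coeffs
  then show "(t1, t2, t3, t4, t5) \<in> reps a"
    unfolding reps_def quartic_expand
    by (simp add: power2_eq_square power3_eq_cube power4_eq_xxxx algebra_simps)
qed

lemma rep_coeffs:
  assumes "(t1, t2, t3, t4, t5) \<in> reps a"
  shows "a 0 = t1^2 + t4^4" "a 1 = 2*t1*t2 + 4*t4^3*t5" "a 2 = t2^2 + 2*t1*t3 + 6*t4^2*t5^2"
    "a 3 = 2*t2*t3 + 4*t4*t5^3" "a 4 = t3^2 + t5^4"
  using assms unfolding rep_iff_coeffs by simp_all

section \<open>Representations with a prescribed ratio\<close>

text \<open>The linear coefficient of the depressed quartic (up to the factor 8 a0^3): for a0 \<noteq> 0 it
  vanishes iff the quartic becomes even after a translation of x.\<close>

definition depressed_coeff :: "(nat \<Rightarrow> complex) \<Rightarrow> complex" where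
  "depressed_coeff a = a 1^3 - 4*a 0*a 1*a 2 + 8*a 0^2*a 3"

lemma rep_t4_nonzero:
  assumes "depressed_coeff a \<noteq> 0" and "(t1, t2, t3, t4, t5) \<in> reps a"
  shows "t4 \<noteq> 0"
proof
  assume "t4 = 0"
  then have "depressed_coeff a = 0"
    using rep_coeffs[OF assms(2)] unfolding depressed_coeff_def by algebra
  then show False using assms(1) by simp
qed

text \<open>The coefficients of x^3 y, x^2 y^2, x y^3, y^4 in p(x - \<rho> y, y).  The substitution turns a
  linear form t4 (x + \<rho> y) into t4 x, so for a representation with ratio \<rho> these are the
  corresponding coefficients of the square of the transformed quadratic form.\<close>

definition shifted1 :: "(nat \<Rightarrow> complex) \<Rightarrow> complex \<Rightarrow> complex" where
  "shifted1 a \<rho> = -4*a 0*\<rho> + a 1"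
definition shifted2 :: "(nat \<Rightarrow> complex) \<Rightarrow> complex \<Rightarrow> complex" where
  "shifted2 a \<rho> = 6*a 0*\<rho>^2 - 3*a 1*\<rho> + a 2"
definition shifted3 :: "(nat \<Rightarrow> complex) \<Rightarrow> complex \<Rightarrow> complex" where
  "shifted3 a \<rho> = -4*a 0*\<rho>^3 + 3*a 1*\<rho>^2 - 2*a 2*\<rho> + a 3"
definition shifted4 :: "(nat \<Rightarrow> complex) \<Rightarrow> complex \<Rightarrow> complex" where
  "shifted4 a \<rho> = a 0*\<rho>^4 - a 1*\<rho>^3 + a 2*\<rho>^2 - a 3*\<rho> + a 4"

lemma shifted_coeffs_of_rep:
  assumes "(t1, t2, t3, t4, \<rho>*t4) \<in> reps a"
  shows "shifted1 a \<rho> = 2*t1*(t2 - 2*\<rho>*t1)"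
    and "shifted2 a \<rho> = (t2 - 2*\<rho>*t1)^2 + 2*t1*(t3 - \<rho>*t2 + \<rho>^2*t1)"
    and "shifted3 a \<rho> = 2*(t2 - 2*\<rho>*t1)*(t3 - \<rho>*t2 + \<rho>^2*t1)"
    and "shifted4 a \<rho> = (t3 - \<rho>*t2 + \<rho>^2*t1)^2"
  using rep_coeffs[OF assms]
  unfolding shifted1_def shifted2_def shifted3_def shifted4_def by algebra+

lemma rep_of_shifted_square:
  assumes "shifted1 a \<rho> = 2*u*v" "shifted2 a \<rho> = v^2 + 2*u*w" "shifted3 a \<rho> = 2*v*w"
    "shifted4 a \<rho> = w^2" and "t4^4 = a 0 - u^2"
  shows "(u, v + 2*\<rho>*u, w + \<rho>*v + \<rho>^2*u, t4, \<rho>*t4) \<in> reps a"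
  using assms unfolding rep_iff_coeffs shifted1_def shifted2_def shifted3_def shifted4_def
  by (intro conjI; algebra)

text \<open>When shifted4 \<noteq> 0, the shifted coefficients are those of a square iff this
  expression vanishes; as a function of \<rho> it is the sextic whose roots are the ratios.\<close>

definition ratio_sextic :: "(nat \<Rightarrow> complex) \<Rightarrow> complex \<Rightarrow> complex" where
  "ratio_sextic a \<rho> = 8*shifted4 a \<rho>^2*shifted1 a \<rho> - 4*shifted2 a \<rho>*shifted3 a \<rho>*shifted4 a \<rho>
     + shifted3 a \<rho>^3"

lemma ratio_sextic_of_rep:
  assumes "(t1, t2, t3, t4, t5) \<in> reps a" and "t4 \<noteq> 0"
  shows "ratio_sextic a (t5/t4) = 0"
proof -
  have "(t1, t2, t3, t4, (t5/t4)*t4) \<in> reps a" using assms by simp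
  from shifted_coeffs_of_rep[OF this] show ?thesis unfolding ratio_sextic_def by algebra
qed

text \<open>Solve for w, v, u
  from shifted4, shifted3, shifted2; the sextic gives shifted1, and K(p) \<noteq> 0 makes a0 - u^2
  nonzero, so that t4 \<noteq> 0.\<close>

lemma rep_of_sextic_root:
  assumes root: "ratio_sextic a \<rho> = 0" and c4: "shifted4 a \<rho> \<noteq> 0"
    and K: "depressed_coeff a \<noteq> 0"
  shows "\<exists>t\<in>reps a. ratio t = Some \<rho>"
proof -
  define w where "w = csqrt (shifted4 a \<rho>)"
  have e4: "shifted4 a \<rho> = w^2" unfolding w_def by simp
  with c4 have w0: "w \<noteq> 0" by auto
  define v where "v = shifted3 a \<rho> / (2*w)"
  define u where "u = (shifted2 a \<rho> - v^2) / (2*w)"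
  have e3: "shifted3 a \<rho> = 2*v*w" unfolding v_def using w0 by simp
  have e2: "shifted2 a \<rho> = v^2 + 2*u*w" unfolding u_def using w0 by (simp add: field_simps)
  have "8*w^4*(shifted1 a \<rho> - 2*u*v) = 0"
    using root unfolding ratio_sextic_def e2 e3 e4 by algebra
  then have e1: "shifted1 a \<rho> = 2*u*v" using w0 by simp
  have m0: "a 0 - u^2 \<noteq> 0"
  proof
    assume "a 0 - u^2 = 0"
    then have "0^4 = a 0 - u^2" by simp
    from rep_t4_nonzero[OF K rep_of_shifted_square[OF e1 e2 e3 e4 this]] show False by simp
  qed
  define t4 where "t4 = csqrt (csqrt (a 0 - u^2))"
  have t4: "t4^4 = a 0 - u^2"
  proof -
    have "t4^4 = (t4^2)^2" by (simp add: power_mult[symmetric])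
    then show ?thesis unfolding t4_def by simp
  qed
  with m0 have "t4 \<noteq> 0" by auto
  then have "ratio (u, v + 2*\<rho>*u, w + \<rho>*v + \<rho>^2*u, t4, \<rho>*t4) = Some \<rho>"
    by (simp add: ratio_def)
  with rep_of_shifted_square[OF e1 e2 e3 e4 t4] show ?thesis by blast
qed

section \<open>Uniqueness up to the symmetries q \<mapsto> -q, l \<mapsto> \<zeta> l\<close>

lemma square_coeffs_unique:
  fixes u v w u' v' w' :: "'a :: {idom, ring_char_0}"
  assumes "w^2 = w'^2" "w' \<noteq> 0" "v*w = v'*w'" "v^2 + 2*u*w = v'^2 + 2*u'*w'"
  shows "\<exists>\<epsilon>. (\<epsilon> = 1 \<or> \<epsilon> = -1) \<and> u = \<epsilon>*u' \<and> v = \<epsilon>*v' \<and> w = \<epsilon>*w'"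
proof -
  obtain \<epsilon> :: 'a where eps: "\<epsilon> = 1 \<or> \<epsilon> = -1" and w: "w = \<epsilon>*w'"
    using assms(1) by (metis power2_eq_iff mult_1 mult_minus1)
  have \<epsilon>2: "\<epsilon>*\<epsilon> = 1" using eps by auto
  have "w'*(v - \<epsilon>*v') = 0" using assms(3) \<epsilon>2 w by algebra
  then have v: "v = \<epsilon>*v'" using assms(2) by simp
  have "2*w'*(u - \<epsilon>*u') = 0" using assms(4) \<epsilon>2 v w by algebra
  then have "u = \<epsilon>*u'" using assms(2) by simp
  with eps v w show ?thesis by blast
qed

lemma rep_equivI:
  assumes "\<epsilon> = 1 \<or> \<epsilon> = -1" "t1 = \<epsilon>*s1" "t2 = \<epsilon>*s2" "t3 = \<epsilon>*s3"
    and "\<zeta>^4 = 1" "t4 = \<zeta>*s4" "t5 = \<zeta>*s5"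
  shows "((s1, s2, s3, s4, s5), (t1, t2, t3, t4, t5)) \<in> rep_equiv"
  unfolding rep_equiv_def using assms by blast

lemma rep_unique_given_ratio:
  assumes s: "(s1, s2, s3, s4, \<rho>*s4) \<in> reps a" and t: "(t1, t2, t3, t4, \<rho>*t4) \<in> reps a"
    and s4: "s4 \<noteq> 0" and c4: "shifted4 a \<rho> \<noteq> 0"
  shows "((s1, s2, s3, s4, \<rho>*s4), (t1, t2, t3, t4, \<rho>*t4)) \<in> rep_equiv"
proof -
  note S = shifted_coeffs_of_rep[OF s] and T = shifted_coeffs_of_rep[OF t]
  have w: "(t3 - \<rho>*t2 + \<rho>^2*t1)^2 = (s3 - \<rho>*s2 + \<rho>^2*s1)^2" using S(4) T(4) by simp
  have w0: "s3 - \<rho>*s2 + \<rho>^2*s1 \<noteq> 0" using S(4) c4 by auto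
  have v: "(t2 - 2*\<rho>*t1)*(t3 - \<rho>*t2 + \<rho>^2*t1) = (s2 - 2*\<rho>*s1)*(s3 - \<rho>*s2 + \<rho>^2*s1)"
    using S(3) T(3) by algebra
  have u: "(t2 - 2*\<rho>*t1)^2 + 2*t1*(t3 - \<rho>*t2 + \<rho>^2*t1)
      = (s2 - 2*\<rho>*s1)^2 + 2*s1*(s3 - \<rho>*s2 + \<rho>^2*s1)"
    using S(2) T(2) by simp
  from square_coeffs_unique[OF w w0 v u] obtain \<epsilon> where eps: "\<epsilon> = 1 \<or> \<epsilon> = -1"
    and e1: "t1 = \<epsilon>*s1" and e2: "t2 - 2*\<rho>*t1 = \<epsilon>*(s2 - 2*\<rho>*s1)"
    and e3: "t3 - \<rho>*t2 + \<rho>^2*t1 = \<epsilon>*(s3 - \<rho>*s2 + \<rho>^2*s1)"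
    by blast
  have e2': "t2 = \<epsilon>*s2" using e1 e2 by algebra
  have e3': "t3 = \<epsilon>*s3" using e1 e2' e3 by algebra
  have "\<epsilon>^2 = 1" using eps by auto
  then have "t4^4 = s4^4" using rep_coeffs(1)[OF s] rep_coeffs(1)[OF t] e1 by algebra
  then have z4: "(t4/s4)^4 = 1" using s4 by (simp add: power_divide)
  have z: "t4 = (t4/s4)*s4" "\<rho>*t4 = (t4/s4)*(\<rho>*s4)" using s4 by simp_all
  show ?thesis by (rule rep_equivI[OF eps e1 e2' e3' z4 z])
qed

lemma ratios_are_sextic_roots:
  assumes K: "depressed_coeff a \<noteq> 0" and c4: "\<And>\<rho>. ratio_sextic a \<rho> = 0 \<Longrightarrow> shifted4 a \<rho> \<noteq> 0"
  shows "ratio ` reps a = Some ` {\<rho>. ratio_sextic a \<rho> = 0}"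
proof (intro equalityI subsetI)
  fix z assume "z \<in> ratio ` reps a"
  then obtain t1 t2 t3 t4 t5 where t: "(t1, t2, t3, t4, t5) \<in> reps a"
    and z: "z = ratio (t1, t2, t3, t4, t5)" by auto
  have "t4 \<noteq> 0" by (rule rep_t4_nonzero[OF K t])
  with ratio_sextic_of_rep[OF t] show "z \<in> Some ` {\<rho>. ratio_sextic a \<rho> = 0}"
    unfolding z ratio_def by auto
next
  fix z assume "z \<in> Some ` {\<rho>. ratio_sextic a \<rho> = 0}"
  then obtain \<rho> where root: "ratio_sextic a \<rho> = 0" and z: "z = Some \<rho>" by auto
  from rep_of_sextic_root[OF root c4[OF root] K] show "z \<in> ratio ` reps a"
    unfolding z by (metis image_eqI)
qed

lemma reps_with_equal_ratio:
  assumes K: "depressed_coeff a \<noteq> 0" and c4: "\<And>\<rho>. ratio_sextic a \<rho> = 0 \<Longrightarrow> shifted4 a \<rho> \<noteq> 0"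
    and x: "x \<in> reps a" and y: "y \<in> reps a" and r: "ratio x = ratio y"
  shows "(x, y) \<in> rep_equiv"
proof -
  obtain s1 s2 s3 s4 s5 where xx: "x = (s1, s2, s3, s4, s5)" by (cases x) auto
  obtain t1 t2 t3 t4 t5 where yy: "y = (t1, t2, t3, t4, t5)" by (cases y) auto
  have s4: "s4 \<noteq> 0" using rep_t4_nonzero[OF K] x unfolding xx by blast
  have t4: "t4 \<noteq> 0" using rep_t4_nonzero[OF K] y unfolding yy by blast
  define \<rho> where "\<rho> = s5/s4"
  have s5: "s5 = \<rho>*s4" and t5: "t5 = \<rho>*t4"
    using r s4 t4 unfolding xx yy ratio_def \<rho>_def by (auto simp: field_simps)
  have "ratio_sextic a \<rho> = 0" unfolding \<rho>_def by (rule ratio_sextic_of_rep[OF x[unfolded xx] s4])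
  from rep_unique_given_ratio[OF _ _ s4 c4[OF this]] x y show ?thesis
    unfolding xx yy s5 t5 by blast
qed

text \<open>The symmetries form a group, so rep_equiv is an equivalence relation.\<close>

lemma equiv_rep: "equiv UNIV rep_equiv"
proof (rule equivI)
  show "refl rep_equiv"
  proof (rule refl_onI)
    fix x :: rep
    obtain s1 s2 s3 s4 s5 where x: "x = (s1, s2, s3, s4, s5)" by (cases x) auto
    show "(x, x) \<in> rep_equiv" unfolding x by (rule rep_equivI[of 1 _ _ _ _ _ _ 1]) auto
  qed
  show "sym rep_equiv"
  proof (rule symI)
    fix x y :: rep
    assume xy: "(x, y) \<in> rep_equiv"
    obtain s1 s2 s3 s4 s5 where x: "x = (s1, s2, s3, s4, s5)" by (cases x) auto
    obtain t1 t2 t3 t4 t5 where y: "y = (t1, t2, t3, t4, t5)" by (cases y) auto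
    from xy obtain \<epsilon> \<zeta> where e: "\<epsilon> = 1 \<or> \<epsilon> = -1" "t1 = \<epsilon>*s1" "t2 = \<epsilon>*s2" "t3 = \<epsilon>*s3"
      and z: "\<zeta>^4 = 1" "t4 = \<zeta>*s4" "t5 = \<zeta>*s5"
      unfolding x y rep_equiv_def by blast
    text \<open>The inverse symmetry uses the same sign and the inverse root of unity \<zeta>^3.\<close>
    have "(\<zeta>^3)^4 = 1" "s4 = \<zeta>^3*t4" "s5 = \<zeta>^3*t5" using z by algebra+
    moreover have "s1 = \<epsilon>*t1" "s2 = \<epsilon>*t2" "s3 = \<epsilon>*t3" using e by auto
    ultimately show "(y, x) \<in> rep_equiv" unfolding x y using e(1) by (intro rep_equivI) auto
  qed
  show "trans rep_equiv"
  proof (rule transI)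
    fix x y z :: rep
    assume xy: "(x, y) \<in> rep_equiv" and yz: "(y, z) \<in> rep_equiv"
    obtain s1 s2 s3 s4 s5 where x: "x = (s1, s2, s3, s4, s5)" by (cases x) auto
    obtain t1 t2 t3 t4 t5 where y: "y = (t1, t2, t3, t4, t5)" by (cases y) auto
    obtain r1 r2 r3 r4 r5 where zz: "z = (r1, r2, r3, r4, r5)" by (cases z) auto
    from xy obtain \<epsilon> \<zeta> where e: "\<epsilon> = 1 \<or> \<epsilon> = -1" "t1 = \<epsilon>*s1" "t2 = \<epsilon>*s2" "t3 = \<epsilon>*s3"
      and z: "\<zeta>^4 = 1" "t4 = \<zeta>*s4" "t5 = \<zeta>*s5"
      unfolding x y rep_equiv_def by blast
    from yz obtain \<epsilon>' \<zeta>' where e': "\<epsilon>' = 1 \<or> \<epsilon>' = -1" "r1 = \<epsilon>'*t1" "r2 = \<epsilon>'*t2" "r3 = \<epsilon>'*t3"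
      and z': "\<zeta>'^4 = 1" "r4 = \<zeta>'*t4" "r5 = \<zeta>'*t5"
      unfolding y zz rep_equiv_def by blast
    have sign: "\<epsilon>'*\<epsilon> = 1 \<or> \<epsilon>'*\<epsilon> = -1" using e(1) e'(1) by auto
    have root: "(\<zeta>'*\<zeta>)^4 = 1" using z(1) z'(1) by (simp add: power_mult_distrib)
    show "(x, z) \<in> rep_equiv" unfolding x zz
      by (rule rep_equivI[OF sign _ _ _ root]) (simp_all add: e e' z z')
  qed
qed simp

lemma ratio_equiv:
  assumes "(x, y) \<in> rep_equiv"
  shows "ratio y = ratio x"
proof -
  obtain s1 s2 s3 s4 s5 where x: "x = (s1, s2, s3, s4, s5)" by (cases x) auto
  obtain t1 t2 t3 t4 t5 where y: "y = (t1, t2, t3, t4, t5)" by (cases y) auto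
  from assms obtain \<zeta> where z: "\<zeta>^4 = 1" "t4 = \<zeta>*s4" "t5 = \<zeta>*s5"
    unfolding x y rep_equiv_def by blast
  then have "\<zeta> \<noteq> 0" by auto
  then show ?thesis unfolding x y ratio_def using z by auto
qed

lemma card_quotient_by_invariant:
  assumes r: "equiv UNIV r" and inv: "\<And>x y. (x, y) \<in> r \<Longrightarrow> f y = f x"
    and sep: "\<And>x y. x \<in> R \<Longrightarrow> y \<in> R \<Longrightarrow> f x = f y \<Longrightarrow> (x, y) \<in> r"
  shows "card (R // r) = card (f ` R)"
proof -
  have "(x, x) \<in> r" for x using r by (metis equivE refl_onD UNIV_I)
  then have class_image: "f ` (r``{x}) = {f x}" for x using inv by auto
  have "inj_on (\<lambda>C. f ` C) (R // r)"
  proof (rule inj_onI)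
    fix C D assume "C \<in> R // r" "D \<in> R // r" and e: "f ` C = f ` D"
    then obtain x y where x: "x \<in> R" "C = r``{x}" and y: "y \<in> R" "D = r``{y}"
      by (auto simp: quotient_def)
    have "f x = f y" using e unfolding x(2) y(2) class_image by simp
    then show "C = D" unfolding x(2) y(2) using sep x(1) y(1) equiv_class_eq[OF r] by blast
  qed
  then have "card (R // r) = card ((\<lambda>C. f ` C) ` (R // r))" by (simp add: card_image)
  also have "R // r = (\<lambda>x. r``{x}) ` R" by (auto simp: quotient_def)
  then have "(\<lambda>C. f ` C) ` (R // r) = (\<lambda>z. {z}) ` (f ` R)"
    by (simp add: image_image class_image)
  also have "card \<dots> = card (f ` R)" by (rule card_image) (auto intro: inj_onI)
  finally show ?thesis .
qed

section \<open>The sextic in terms of the roots of the quartic\<close>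

lemma quartic_vieta:
  fixes a :: "nat \<Rightarrow> complex"
  assumes a0: "a 0 \<noteq> 0"
  obtains r1 r2 r3 r4 where "a 1 = - a 0 * (r1 + r2 + r3 + r4)"
    "a 2 = a 0 * (r1*r2 + r1*r3 + r1*r4 + r2*r3 + r2*r4 + r3*r4)"
    "a 3 = - a 0 * (r1*r2*r3 + r1*r2*r4 + r1*r3*r4 + r2*r3*r4)"
    "a 4 = a 0 * (r1*r2*r3*r4)"
proof -
  define p where "p = [:a 4, a 3, a 2, a 1, a 0:]"
  have dp: "degree p = 4" and lp: "lead_coeff p = a 0" using a0 by (simp_all add: p_def)
  obtain r where r: "smult (lead_coeff p) (\<Prod>i<degree p. [:-r i, 1:]) = p"
    using complex_poly_decompose' by blast
  have "poly p x = a 0 * (\<Prod>i<4. x - r i)" for x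
    using arg_cong[OF r, of "\<lambda>q. poly q x"] lp dp unfolding poly_smult poly_prod by simp
  then have factored: "a 4 + x*(a 3 + x*(a 2 + x*(a 1 + x*a 0)))
      = a 0 * ((x - r 0)*(x - r 1)*(x - r 2)*(x - r 3))" for x
    by (simp add: p_def numeral_eq_Suc lessThan_Suc)
  have "(a 0 - a 0)*x^4 + (a 1 + a 0*(r 0 + r 1 + r 2 + r 3))*x^3
      + (a 2 - a 0*(r 0*r 1 + r 0*r 2 + r 0*r 3 + r 1*r 2 + r 1*r 3 + r 2*r 3))*x^2
      + (a 3 + a 0*(r 0*r 1*r 2 + r 0*r 1*r 3 + r 0*r 2*r 3 + r 1*r 2*r 3))*x
      + (a 4 - a 0*(r 0*r 1*r 2*r 3)) = 0" for x
    using factored[of x] by algebra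
  from quartic_poly_eq_0[OF this] show ?thesis
    by (intro that[of "r 0" "r 1" "r 2" "r 3"]) (simp_all add: algebra_simps eq_neg_iff_add_eq_0)
qed

definition discriminant :: "(nat \<Rightarrow> complex) \<Rightarrow> complex" where
  "discriminant A = (let a = A 0; b = A 1; c = A 2; d = A 3; e = A 4 in
     256*a^3*e^3 - 192*a^2*b*d*e^2 - 128*a^2*c^2*e^2 + 144*a^2*c*d^2*e - 27*a^2*d^4
     + 144*a*b^2*c*e^2 - 6*a*b^2*d^2*e - 80*a*b*c^2*d*e + 18*a*b*c*d^3 + 16*a*c^4*e
     - 4*a*c^3*d^2 - 27*b^4*e^2 + 18*b^3*c*d*e - 4*b^3*d^3 - 4*b^2*c^3*e + b^2*c^2*d^2)"

text \<open>The quadratic attached to the splitting {x1, x2} | {x3, x4} of the roots.  The negatives of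
  its roots form the unique pair harmonically separating both {x1, x2} and {x3, x4}.\<close>

definition pairing_a :: "complex \<Rightarrow> complex \<Rightarrow> complex \<Rightarrow> complex \<Rightarrow> complex" where
  "pairing_a x1 x2 x3 x4 = x1 + x2 - x3 - x4"
definition pairing_b :: "complex \<Rightarrow> complex \<Rightarrow> complex \<Rightarrow> complex \<Rightarrow> complex" where
  "pairing_b x1 x2 x3 x4 = 2*(x1*x2 - x3*x4)"
definition pairing_c :: "complex \<Rightarrow> complex \<Rightarrow> complex \<Rightarrow> complex \<Rightarrow> complex" where
  "pairing_c x1 x2 x3 x4 = x1*x2*(x3 + x4) - (x1 + x2)*x3*x4"
definition pairing_quadratic :: "complex \<Rightarrow> complex \<Rightarrow> complex \<Rightarrow> complex \<Rightarrow> complex \<Rightarrow> complex" where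
  "pairing_quadratic x1 x2 x3 x4 \<rho> =
     pairing_a x1 x2 x3 x4*\<rho>^2 + pairing_b x1 x2 x3 x4*\<rho> + pairing_c x1 x2 x3 x4"

context
  fixes a :: "nat \<Rightarrow> complex" and r1 r2 r3 r4 :: complex
  assumes vieta1: "a 1 = - a 0 * (r1 + r2 + r3 + r4)"
    and vieta2: "a 2 = a 0 * (r1*r2 + r1*r3 + r1*r4 + r2*r3 + r2*r4 + r3*r4)"
    and vieta3: "a 3 = - a 0 * (r1*r2*r3 + r1*r2*r4 + r1*r3*r4 + r2*r3*r4)"
    and vieta4: "a 4 = a 0 * (r1*r2*r3*r4)"
begin

lemma ratio_sextic_factor:
  "ratio_sextic a \<rho> = a 0^3 * pairing_quadratic r1 r2 r3 r4 \<rho> * pairing_quadratic r1 r3 r2 r4 \<rho>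
     * pairing_quadratic r1 r4 r2 r3 \<rho>"
  unfolding ratio_sextic_def shifted1_def shifted2_def shifted3_def shifted4_def
    pairing_quadratic_def pairing_a_def pairing_b_def pairing_c_def vieta1 vieta2 vieta3 vieta4
  by algebra

lemma depressed_coeff_factor:
  "depressed_coeff a = - (a 0^3 * pairing_a r1 r2 r3 r4 * pairing_a r1 r3 r2 r4 * pairing_a r1 r4 r2 r3)"
  unfolding depressed_coeff_def pairing_a_def vieta1 vieta2 vieta3 by algebra

lemma shifted4_factor: "shifted4 a \<rho> = a 0 * ((\<rho> + r1)*(\<rho> + r2)*(\<rho> + r3)*(\<rho> + r4))"
  unfolding shifted4_def vieta1 vieta2 vieta3 vieta4 by algebra

lemma discriminant_factor:
  "discriminant a = a 0^6 * ((r1 - r2)*(r1 - r3)*(r1 - r4)*(r2 - r3)*(r2 - r4)*(r3 - r4))^2"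
  unfolding discriminant_def Let_def vieta1 vieta2 vieta3 vieta4 by algebra

end

lemma pairing_discriminant:
  "pairing_b x1 x2 x3 x4^2 - 4*pairing_a x1 x2 x3 x4*pairing_c x1 x2 x3 x4
     = 4*(x1 - x3)*(x1 - x4)*(x2 - x3)*(x2 - x4)"
  unfolding pairing_a_def pairing_b_def pairing_c_def by algebra

lemma pairing_quadratic_root_shift:
  assumes "pairing_quadratic x1 x2 x3 x4 \<rho> = 0"
    and "x1 \<noteq> x2" "x1 \<noteq> x3" "x1 \<noteq> x4" "x2 \<noteq> x3" "x2 \<noteq> x4" "x3 \<noteq> x4"
  shows "\<rho> + x1 \<noteq> 0 \<and> \<rho> + x2 \<noteq> 0 \<and> \<rho> + x3 \<noteq> 0 \<and> \<rho> + x4 \<noteq> 0"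
proof -
  have "pairing_quadratic x1 x2 x3 x4 (-x1) = (x1 - x2)*(x1 - x3)*(x1 - x4)"
    "pairing_quadratic x1 x2 x3 x4 (-x2) = (x2 - x1)*(x2 - x3)*(x2 - x4)"
    "pairing_quadratic x1 x2 x3 x4 (-x3) = -((x3 - x1)*(x3 - x2)*(x3 - x4))"
    "pairing_quadratic x1 x2 x3 x4 (-x4) = -((x4 - x1)*(x4 - x2)*(x4 - x3))"
    unfolding pairing_quadratic_def pairing_a_def pairing_b_def pairing_c_def by algebra+
  with assms show ?thesis by (auto simp: add_eq_0_iff2)
qed

lemma pairing_apolar:
  "2*pairing_a r1 r2 r3 r4*pairing_c r1 r3 r2 r4 + 2*pairing_a r1 r3 r2 r4*pairing_c r1 r2 r3 r4
     - pairing_b r1 r2 r3 r4*pairing_b r1 r3 r2 r4 = 0"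
  "2*pairing_a r1 r2 r3 r4*pairing_c r1 r4 r2 r3 + 2*pairing_a r1 r4 r2 r3*pairing_c r1 r2 r3 r4
     - pairing_b r1 r2 r3 r4*pairing_b r1 r4 r2 r3 = 0"
  "2*pairing_a r1 r3 r2 r4*pairing_c r1 r4 r2 r3 + 2*pairing_a r1 r4 r2 r3*pairing_c r1 r3 r2 r4
     - pairing_b r1 r3 r2 r4*pairing_b r1 r4 r2 r3 = 0"
  unfolding pairing_a_def pairing_b_def pairing_c_def by algebra+

lemma quadratic_split:
  fixes \<alpha> \<beta> \<gamma> :: complex
  assumes "\<alpha> \<noteq> 0"
  obtains r1 r2 where "\<And>\<rho>. \<alpha>*\<rho>^2 + \<beta>*\<rho> + \<gamma> = \<alpha>*(\<rho> - r1)*(\<rho> - r2)"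
    and "\<alpha>*(r1 + r2) = -\<beta>" and "\<alpha>*(r1*r2) = \<gamma>" and "(\<alpha>*(r1 - r2))^2 = \<beta>^2 - 4*\<alpha>*\<gamma>"
proof -
  define s where "s = csqrt (\<beta>^2 - 4*\<alpha>*\<gamma>)"
  have s2: "s^2 = \<beta>^2 - 4*\<alpha>*\<gamma>" unfolding s_def by simp
  define r1 where "r1 = (-\<beta> + s) / (2*\<alpha>)"
  define r2 where "r2 = (-\<beta> - s) / (2*\<alpha>)"
  have sum: "\<alpha>*(r1 + r2) = -\<beta>" unfolding r1_def r2_def using assms by (simp add: field_simps)
  have diff: "\<alpha>*(r1 - r2) = s" unfolding r1_def r2_def using assms by (simp add: field_simps)
  have "4*\<alpha>^2*(\<alpha>*(r1*r2)) = \<alpha>*(\<beta>^2 - s^2)" unfolding r1_def r2_def using assms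
    by (simp add: field_simps power2_eq_square)
  then have prod: "\<alpha>*(r1*r2) = \<gamma>" unfolding s2 using assms by (simp add: power2_eq_square algebra_simps)
  have split: "\<alpha>*\<rho>^2 + \<beta>*\<rho> + \<gamma> = \<alpha>*(\<rho> - r1)*(\<rho> - r2)" for \<rho>
    using sum prod by algebra
  show ?thesis by (rule that[OF split sum prod]) (use diff s2 in simp)
qed

text \<open>The pairs {p1, p2} and {p3, p4} are harmonic: their cross-ratio is -1.\<close>

definition harmonic :: "complex \<Rightarrow> complex \<Rightarrow> complex \<Rightarrow> complex \<Rightarrow> bool" where
  "harmonic p1 p2 p3 p4 \<longleftrightarrow> (p1 + p2)*(p3 + p4) = 2*(p1*p2 + p3*p4)"

lemma harmonic_of_apolar:
  fixes \<alpha> \<beta> \<gamma> \<alpha>' \<beta>' \<gamma>' :: complex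
  assumes "\<alpha> \<noteq> 0" "\<alpha>' \<noteq> 0"
    and "\<alpha>*(r1 + r2) = -\<beta>" "\<alpha>*(r1*r2) = \<gamma>" "\<alpha>'*(s1 + s2) = -\<beta>'" "\<alpha>'*(s1*s2) = \<gamma>'"
    and "2*\<alpha>*\<gamma>' + 2*\<alpha>'*\<gamma> - \<beta>*\<beta>' = 0"
  shows "harmonic r1 r2 s1 s2"
proof -
  have "\<alpha>*\<alpha>'*((r1 + r2)*(s1 + s2) - 2*(r1*r2 + s1*s2)) = 0"
    using assms(3-7) by algebra
  then show ?thesis using assms(1,2) unfolding harmonic_def by simp
qed

lemma pairing_quadratic_roots:
  assumes "pairing_a x1 x2 x3 x4 \<noteq> 0" "x1 \<noteq> x3" "x1 \<noteq> x4" "x2 \<noteq> x3" "x2 \<noteq> x4"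
  obtains \<rho>1 \<rho>2 where
    "\<And>\<rho>. pairing_quadratic x1 x2 x3 x4 \<rho> = pairing_a x1 x2 x3 x4 * (\<rho> - \<rho>1)*(\<rho> - \<rho>2)"
    "\<rho>1 \<noteq> \<rho>2" "pairing_a x1 x2 x3 x4*(\<rho>1 + \<rho>2) = - pairing_b x1 x2 x3 x4"
    "pairing_a x1 x2 x3 x4*(\<rho>1*\<rho>2) = pairing_c x1 x2 x3 x4"
proof -
  obtain \<rho>1 \<rho>2 where split: "\<And>\<rho>. pairing_quadratic x1 x2 x3 x4 \<rho>
      = pairing_a x1 x2 x3 x4 * (\<rho> - \<rho>1)*(\<rho> - \<rho>2)"
    and vieta: "pairing_a x1 x2 x3 x4*(\<rho>1 + \<rho>2) = - pairing_b x1 x2 x3 x4"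
      "pairing_a x1 x2 x3 x4*(\<rho>1*\<rho>2) = pairing_c x1 x2 x3 x4"
    and disc: "(pairing_a x1 x2 x3 x4*(\<rho>1 - \<rho>2))^2 = 4*(x1 - x3)*(x1 - x4)*(x2 - x3)*(x2 - x4)"
    by (rule quadratic_split[OF assms(1), of "pairing_b x1 x2 x3 x4" "pairing_c x1 x2 x3 x4"])
      (simp_all only: pairing_quadratic_def pairing_discriminant)
  have "\<rho>1 \<noteq> \<rho>2" using disc assms by auto
  from that[OF split this vieta] show ?thesis .
qed

lemma generic_ratio_sextic:
  assumes a0: "a 0 \<noteq> 0" and disc: "discriminant a \<noteq> 0" and K: "depressed_coeff a \<noteq> 0"
  obtains p1 p2 p3 p4 p5 p6 where "p1 \<noteq> p2" "p3 \<noteq> p4" "p5 \<noteq> p6"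
    "harmonic p1 p2 p3 p4" "harmonic p1 p2 p5 p6" "harmonic p3 p4 p5 p6"
    "\<And>\<rho>. ratio_sextic a \<rho> = 0 \<longleftrightarrow> \<rho> \<in> {p1, p2, p3, p4, p5, p6}"
    "\<And>\<rho>. ratio_sextic a \<rho> = 0 \<Longrightarrow> shifted4 a \<rho> \<noteq> 0"
proof -
  obtain r1 r2 r3 r4 where v: "a 1 = - a 0 * (r1 + r2 + r3 + r4)"
    "a 2 = a 0 * (r1*r2 + r1*r3 + r1*r4 + r2*r3 + r2*r4 + r3*r4)"
    "a 3 = - a 0 * (r1*r2*r3 + r1*r2*r4 + r1*r3*r4 + r2*r3*r4)" "a 4 = a 0 * (r1*r2*r3*r4)"
    using quartic_vieta[of a, OF a0] by blast
  note sextic = ratio_sextic_factor[OF v] and shift = shifted4_factor[OF v]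
  have dr: "r1 \<noteq> r2" "r1 \<noteq> r3" "r1 \<noteq> r4" "r2 \<noteq> r3" "r2 \<noteq> r4" "r3 \<noteq> r4"
    using disc unfolding discriminant_factor[OF v] by auto
  have A: "pairing_a r1 r2 r3 r4 \<noteq> 0" "pairing_a r1 r3 r2 r4 \<noteq> 0" "pairing_a r1 r4 r2 r3 \<noteq> 0"
    using K unfolding depressed_coeff_factor[OF v] by auto
  obtain p1 p2 where q12: "\<And>\<rho>. pairing_quadratic r1 r2 r3 r4 \<rho> = pairing_a r1 r2 r3 r4*(\<rho> - p1)*(\<rho> - p2)"
    and d12: "p1 \<noteq> p2" and v12: "pairing_a r1 r2 r3 r4*(p1 + p2) = - pairing_b r1 r2 r3 r4"
      "pairing_a r1 r2 r3 r4*(p1*p2) = pairing_c r1 r2 r3 r4"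
    by (rule pairing_quadratic_roots[OF A(1)]) (use dr in auto)
  obtain p3 p4 where q34: "\<And>\<rho>. pairing_quadratic r1 r3 r2 r4 \<rho> = pairing_a r1 r3 r2 r4*(\<rho> - p3)*(\<rho> - p4)"
    and d34: "p3 \<noteq> p4" and v34: "pairing_a r1 r3 r2 r4*(p3 + p4) = - pairing_b r1 r3 r2 r4"
      "pairing_a r1 r3 r2 r4*(p3*p4) = pairing_c r1 r3 r2 r4"
    by (rule pairing_quadratic_roots[OF A(2)]) (use dr in auto)
  obtain p5 p6 where q56: "\<And>\<rho>. pairing_quadratic r1 r4 r2 r3 \<rho> = pairing_a r1 r4 r2 r3*(\<rho> - p5)*(\<rho> - p6)"
    and d56: "p5 \<noteq> p6" and v56: "pairing_a r1 r4 r2 r3*(p5 + p6) = - pairing_b r1 r4 r2 r3"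
      "pairing_a r1 r4 r2 r3*(p5*p6) = pairing_c r1 r4 r2 r3"
    by (rule pairing_quadratic_roots[OF A(3)]) (use dr in auto)
  have "harmonic p1 p2 p3 p4" by (rule harmonic_of_apolar[OF A(1,2) v12 v34 pairing_apolar(1)])
  moreover have "harmonic p1 p2 p5 p6" by (rule harmonic_of_apolar[OF A(1,3) v12 v56 pairing_apolar(2)])
  moreover have "harmonic p3 p4 p5 p6" by (rule harmonic_of_apolar[OF A(2,3) v34 v56 pairing_apolar(3)])
  moreover have roots: "ratio_sextic a \<rho> = 0 \<longleftrightarrow> \<rho> \<in> {p1, p2, p3, p4, p5, p6}" for \<rho>
    unfolding sextic q12 q34 q56 using a0 A by auto
  moreover have "shifted4 a \<rho> \<noteq> 0" if "ratio_sextic a \<rho> = 0" for \<rho>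
  proof -
    have "pairing_quadratic r1 r2 r3 r4 \<rho> = 0 \<or> pairing_quadratic r1 r3 r2 r4 \<rho> = 0
        \<or> pairing_quadratic r1 r4 r2 r3 \<rho> = 0"
      using that a0 unfolding sextic by auto
    then have "\<rho> + r1 \<noteq> 0 \<and> \<rho> + r2 \<noteq> 0 \<and> \<rho> + r3 \<noteq> 0 \<and> \<rho> + r4 \<noteq> 0"
      using pairing_quadratic_root_shift[of r1 r2 r3 r4 \<rho>] pairing_quadratic_root_shift[of r1 r3 r2 r4 \<rho>]
        pairing_quadratic_root_shift[of r1 r4 r2 r3 \<rho>] dr by auto
    then show ?thesis unfolding shift using a0 by simp
  qed
  ultimately show ?thesis using that d12 d34 d56 by blast
qed

section \<open>Three mutually harmonic pairs form an octahedron\<close>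

lemma harmonic_sym:
  assumes "harmonic p1 p2 p3 p4"
  shows "harmonic p2 p1 p3 p4" and "harmonic p1 p2 p4 p3" and "harmonic p3 p4 p1 p2"
  using assms unfolding harmonic_def by (simp_all add: ac_simps)

lemma harmonic_ne:
  assumes "harmonic p1 p2 p3 p4" "p1 \<noteq> p2" "p3 \<noteq> p4"
  shows "p1 \<noteq> p3"
proof
  assume "p1 = p3"
  with assms(1) have "(p1 - p2)*(p1 - p4) = 0" unfolding harmonic_def by algebra
  with assms(2,3) \<open>p1 = p3\<close> show False by auto
qed

lemma harmonic_disjoint:
  assumes "harmonic p1 p2 p3 p4" "p1 \<noteq> p2" "p3 \<noteq> p4"
  shows "p1 \<noteq> p3" "p1 \<noteq> p4" "p2 \<noteq> p3" "p2 \<noteq> p4"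
  using harmonic_ne[OF assms] harmonic_ne[OF harmonic_sym(2)[OF assms(1)] assms(2) assms(3)[symmetric]]
    harmonic_ne[OF harmonic_sym(1)[OF assms(1)] assms(2)[symmetric] assms(3)]
    harmonic_ne[OF harmonic_sym(1)[OF harmonic_sym(2)[OF assms(1)]] assms(2)[symmetric] assms(3)[symmetric]]
  by auto

text \<open>The cross-ratio of x with respect to p1, p2, p3, and the Moebius transformation sending
  0, \<infinity>, 1 to p1, p2, p3; it inverts the cross-ratio.\<close>

definition cross_ratio :: "complex \<Rightarrow> complex \<Rightarrow> complex \<Rightarrow> complex \<Rightarrow> complex" where
  "cross_ratio p1 p2 p3 x = ((x - p1)*(p2 - p3)) / ((p3 - p1)*(p2 - x))"

definition mobius3 :: "complex \<Rightarrow> complex \<Rightarrow> complex \<Rightarrow> complex option \<Rightarrow> complex option" where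
  "mobius3 p1 p2 p3 = mobius (p2*(p3 - p1)) (p1*(p2 - p3)) (p3 - p1) (p2 - p3)"

lemma mobius3_det:
  "(p2*(p3 - p1))*(p2 - p3) - (p1*(p2 - p3))*(p3 - p1) = (p3 - p1)*(p2 - p3)*(p2 - (p1::complex))"
  by algebra

lemma mobius3_0_infinity:
  assumes "p1 \<noteq> p3" "p2 \<noteq> p3"
  shows "mobius3 p1 p2 p3 (Some 0) = Some p1" "mobius3 p1 p2 p3 None = Some p2"
  using assms unfolding mobius3_def mobius_def by auto

lemma cross_ratio_eq:
  assumes "p1 \<noteq> p3" "x \<noteq> p2"
  shows "(p3 - p1)*(p2 - x)*cross_ratio p1 p2 p3 x = (x - p1)*(p2 - p3)"
  using assms unfolding cross_ratio_def by simp

lemma mobius3_cross_ratio: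
  assumes "p1 \<noteq> p2" "p1 \<noteq> p3" "p2 \<noteq> p3" "x \<noteq> p2"
  shows "mobius3 p1 p2 p3 (Some (cross_ratio p1 p2 p3 x)) = Some x"
proof -
  let ?w = "cross_ratio p1 p2 p3 x"
  note w = cross_ratio_eq[OF assms(2,4)]
  have num: "p2*(p3 - p1)*?w + p1*(p2 - p3) = x*((p3 - p1)*?w + (p2 - p3))"
    using w by algebra
  have "((p3 - p1)*?w + (p2 - p3))*(p2 - x) = (p2 - p3)*(p2 - p1)"
    using w by algebra
  then have "(p3 - p1)*?w + (p2 - p3) \<noteq> 0" using assms by auto
  then show ?thesis unfolding mobius3_def mobius_def by (simp add: num)
qed

lemma cross_ratio_harmonic:
  assumes "harmonic p1 p2 p3 x" "p1 \<noteq> p3" "x \<noteq> p2"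
  shows "cross_ratio p1 p2 p3 x = -1"
proof -
  have "(p3 - p1)*(p2 - x)*(cross_ratio p1 p2 p3 x + 1) = 0"
    using cross_ratio_eq[OF assms(2,3)] assms(1) unfolding harmonic_def by algebra
  then show ?thesis using assms(2,3) by (simp add: add_eq_0_iff2)
qed

lemma cross_ratio_harmonic_pair:
  assumes "harmonic p1 p2 p3 p4" "harmonic p1 p2 x y" "harmonic p3 p4 x y" "p1 \<noteq> p3" "x \<noteq> p2"
  shows "cross_ratio p1 p2 p3 x = \<i> \<or> cross_ratio p1 p2 p3 x = -\<i>"
proof -
  have "((p3 - p1)*(p2 - x))^2*((cross_ratio p1 p2 p3 x)^2 + 1) = 0"
    using cross_ratio_eq[OF assms(4,5)] assms(1-3) unfolding harmonic_def by algebra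
  then have "(cross_ratio p1 p2 p3 x)^2 = \<i>^2" using assms(4,5) by (simp add: add_eq_0_iff2)
  then show ?thesis by (metis power2_eq_iff)
qed

lemma mobius_octahedron:
  assumes d: "p1 \<noteq> p2" "p3 \<noteq> p4" "p5 \<noteq> p6"
    and h12: "harmonic p1 p2 p3 p4" and h13: "harmonic p1 p2 p5 p6" and h23: "harmonic p3 p4 p5 p6"
  shows "\<exists>\<alpha> \<beta> \<gamma> \<delta>. \<alpha> * \<delta> - \<beta> * \<gamma> \<noteq> 0 \<and>
     {Some p1, Some p2, Some p3, Some p4, Some p5, Some p6}
       = mobius \<alpha> \<beta> \<gamma> \<delta> ` {Some 0, None, Some 1, Some (-1), Some \<i>, Some (-\<i>)}"
proof -
  note D12 = harmonic_disjoint[OF h12 d(1,2)] and D13 = harmonic_disjoint[OF h13 d(1,3)]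
  let ?M = "mobius3 p1 p2 p3"
  have M0: "?M (Some 0) = Some p1" and M_inf: "?M None = Some p2"
    using mobius3_0_infinity D12 by auto
  have "cross_ratio p1 p2 p3 p3 = 1" using D12 unfolding cross_ratio_def by simp
  then have M1: "?M (Some 1) = Some p3" using mobius3_cross_ratio[of p1 p2 p3 p3] d D12 by simp
  have M_minus1: "?M (Some (-1)) = Some p4"
    using mobius3_cross_ratio[of p1 p2 p3 p4] cross_ratio_harmonic[OF h12] d D12 by simp
  have harmonic_pair: "\<exists>w. (w = \<i> \<or> w = -\<i>) \<and> ?M (Some w) = Some x"
    if "harmonic p1 p2 x y" "harmonic p3 p4 x y" "x \<noteq> p2" for x y
    using mobius3_cross_ratio[of p1 p2 p3 x] cross_ratio_harmonic_pair[OF h12 that(1,2) D12(1) that(3)]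
      d D12 that(3) by blast
  obtain w5 where w5: "w5 = \<i> \<or> w5 = -\<i>" "?M (Some w5) = Some p5"
    using harmonic_pair[OF h13 h23 D13(3)[symmetric]] by blast
  obtain w6 where w6: "w6 = \<i> \<or> w6 = -\<i>" "?M (Some w6) = Some p6"
    using harmonic_pair[OF harmonic_sym(2)[OF h13] harmonic_sym(2)[OF h23] D13(4)[symmetric]] by blast
  have "w5 \<noteq> w6" using w5(2) w6(2) d(3) by auto
  then have "{w5, w6} = {\<i>, -\<i>}" using w5(1) w6(1) by auto
  then have "{Some p1, Some p2, Some p3, Some p4, Some p5, Some p6}
      = ?M ` {Some 0, None, Some 1, Some (-1), Some \<i>, Some (-\<i>)}"
    using M0 M_inf M1 M_minus1 w5(2) w6(2) by (auto simp: doubleton_eq_iff)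
  moreover have "(p3 - p1)*(p2 - p3)*(p2 - p1) \<noteq> 0" using d D12 by auto
  ultimately show ?thesis unfolding mobius3_def using mobius3_det by metis
qed

lemma octahedron_card:
  assumes d: "p1 \<noteq> p2" "p3 \<noteq> p4" "p5 \<noteq> p6"
    and h12: "harmonic p1 p2 p3 p4" and h13: "harmonic p1 p2 p5 p6" and h23: "harmonic p3 p4 p5 p6"
  shows "card {p1, p2, p3, p4, p5, p6} = 6"
  using d harmonic_disjoint[OF h12 d(1,2)] harmonic_disjoint[OF h13 d(1,3)]
    harmonic_disjoint[OF h23 d(2,3)] by simp

section \<open>The genericity condition\<close>

lemma poly_fun_diff: "poly_fun n f \<Longrightarrow> poly_fun n g \<Longrightarrow> poly_fun n (\<lambda>a. f a - g a)"
  using pf_add[of n f "\<lambda>a. (-1) * g a"] pf_mult[OF pf_const[of n "-1"], of g] by simp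

lemma poly_fun_power: "poly_fun n f \<Longrightarrow> poly_fun n (\<lambda>a. f a ^ k)"
proof (induction k)
  case 0
  then show ?case using pf_const[of n 1] by simp
next
  case (Suc k)
  then show ?case using pf_mult[OF Suc.prems Suc.IH[OF Suc.prems]] by simp
qed

definition generic_poly :: "(nat \<Rightarrow> complex) \<Rightarrow> complex" where
  "generic_poly a = a 0 * discriminant a * depressed_coeff a"

lemma poly_fun_generic_poly: "poly_fun 5 generic_poly"
  unfolding generic_poly_def discriminant_def Let_def depressed_coeff_def
  by (intro pf_add poly_fun_diff pf_mult poly_fun_power pf_const pf_var; simp)

text \<open>Witness: the quartic x^4 + x^3 y + y^4.\<close>

lemma generic_poly_nonzero: "\<exists>a. generic_poly a \<noteq> 0"
proof
  show "generic_poly (\<lambda>k. if k = 2 \<or> k = 3 then 0 else 1) \<noteq> 0"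
    unfolding generic_poly_def discriminant_def Let_def depressed_coeff_def by simp
qed

theorem theorem4p6:
  shows "general_quartic (\<lambda>a.
           card (reps a // rep_equiv) = 6 \<and>
           (\<exists>\<alpha> \<beta> \<gamma> \<delta>. \<alpha> * \<delta> - \<beta> * \<gamma> \<noteq> 0 \<and>
              ratio ` reps a = mobius \<alpha> \<beta> \<gamma> \<delta> `
                {Some 0, None, Some 1, Some (-1), Some \<i>, Some (-\<i>)}))"
  unfolding general_quartic_def
proof (intro exI[of _ generic_poly] conjI allI impI)
  show "poly_fun 5 generic_poly" by (rule poly_fun_generic_poly)
  show "\<exists>a. generic_poly a \<noteq> 0" by (rule generic_poly_nonzero)
  fix a assume "generic_poly a \<noteq> 0"
  then have a0: "a 0 \<noteq> 0" and disc: "discriminant a \<noteq> 0" and K: "depressed_coeff a \<noteq> 0"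
    by (simp_all add: generic_poly_def)
  obtain p1 p2 p3 p4 p5 p6 where d: "p1 \<noteq> p2" "p3 \<noteq> p4" "p5 \<noteq> p6"
    and h: "harmonic p1 p2 p3 p4" "harmonic p1 p2 p5 p6" "harmonic p3 p4 p5 p6"
    and roots: "\<And>\<rho>. ratio_sextic a \<rho> = 0 \<longleftrightarrow> \<rho> \<in> {p1, p2, p3, p4, p5, p6}"
    and c4: "\<And>\<rho>. ratio_sextic a \<rho> = 0 \<Longrightarrow> shifted4 a \<rho> \<noteq> 0"
    using generic_ratio_sextic[OF a0 disc K] by blast
  have "{\<rho>. ratio_sextic a \<rho> = 0} = {p1, p2, p3, p4, p5, p6}" using roots by blast
  with ratios_are_sextic_roots[OF K c4]
  have ratios: "ratio ` reps a = Some ` {p1, p2, p3, p4, p5, p6}" by simp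
  have "card (reps a // rep_equiv) = card (ratio ` reps a)"
    using card_quotient_by_invariant[OF equiv_rep ratio_equiv reps_with_equal_ratio[OF K c4]] .
  also have "\<dots> = card {p1, p2, p3, p4, p5, p6}" unfolding ratios by (rule card_image) (auto intro: inj_onI)
  also have "\<dots> = 6" by (rule octahedron_card[OF d h])
  finally show "card (reps a // rep_equiv) = 6" .
  show "\<exists>\<alpha> \<beta> \<gamma> \<delta>. \<alpha> * \<delta> - \<beta> * \<gamma> \<noteq> 0 \<and> ratio ` reps a = mobius \<alpha> \<beta> \<gamma> \<delta> `
      {Some 0, None, Some 1, Some (-1), Some \<i>, Some (-\<i>)}"
    unfolding ratios using mobius_octahedron[OF d h] by simp
qed

end
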